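(* Let $\{(\mathbf{x}^k,\mathbf{r}^k,\boldsymbol{\lambda}^k)\}$ be generated by Algorithm 1 and $k\ge 0$. Then for any $\mathbf{x}$ independent of $i_k$ with $\mathbf{A}\mathbf{x}=\mathbf{b}$, $$\begin{aligned}&\mathbb{E}_{i_k}\Big[F(\mathbf{x}^{k+1})-F(\mathbf{x})-\langle\boldsymbol{\lambda}^{k+1},\mathbf{r}^{k+1}\rangle+(\beta-\rho)\|\mathbf{r}^{k+1}\|^2-\tfrac{\beta}{2}\|\mathbf{r}^{k+1}\|^2\Big]+\tfrac12\mathbb{E}_{i_k}\Big[\|\mathbf{x}^{k+1}-\mathbf{x}\|_{\mathbf{P}}^2+\|\mathbf{x}^{k+1}-\mathbf{x}^k\|_{\mathbf{P}-\mathbf{L}-\beta\mathbf{A}^\top\mathbf{A}}^2\Big]\\ &\le\Big(1-\frac1m\Big)\Big[F(\mathbf{x}^k)-F(\mathbf{x})-\langle\boldsymbol{\lambda}^k,\mathbf{r}^k\rangle+\beta\|\mathbf{r}^k\|^2\Big]-\tfrac{\beta}{2}\|\mathbf{r}^k\|^2+\tfrac12\|\mathbf{x}^k-\mathbf{x}\|_{\mathbf{P}}^2,\end{aligned}$$ where $\mathbf{P}=\mathrm{blkdiag}(\mathbf{P}_1,\ldots,\mathbf{P}_m)$ (here $\|\mathbf{z}\|_{\mathbf{M}}^2:=\mathbf{z}^\top\mathbf{M}\mathbf{z}$ for any symmetric $\mathbf{M}$).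
   Context: Problem: $\min_{\mathbf{x}} F(\mathbf{x}):=f(\mathbf{x})+g(\mathbf{x})$ s.t. $\mathbf{A}\mathbf{x}=\mathbf{b}$, where $\mathbf{x}=(\mathbf{x}_1;\ldots;\mathbf{x}_m)$ with blocks $\mathbf{x}_i\in\mathbb{R}^{n_i}$, $g(\mathbf{x})=\sum_{i=1}^m g_i(\mathbf{x}_i)$, $\mathbf{A}=[\mathbf{A}_1,\ldots,\mathbf{A}_m]$ with $\mathbf{A}_i\in\mathbb{R}^{q\times n_i}$, $\mathbf{b}\in\mathbb{R}^q$; $f$ is convex and continuously differentiable, each $g_i$ is proper, convex, lower semicontinuous. $\nabla_i f$ denotes the partial gradient w.r.t. block $i$; $\mathbf{U}_i\mathbf{y}$ denotes the vector whose $i$-th block is $\mathbf{y}_i$ and other blocks zero. Assumption (gradient Lipschitz continuity): there are constants $L_i>0$ and $L_r$ with $\|\nabla_i f(\mathbf{x}+\mathbf{U}_i\mathbf{y})-\nabla_i f(\mathbf{x})\|\le L_i\|\mathbf{y}_i\|$ and $\|\nabla f(\mathbf{x}+\mathbf{U}_i\mathbf{y})-\nabla f(\mathbf{x})\|\le L_r\|\mathbf{y}_i\|$ for all $i,\mathbf{x},\mathbf{y}$. $\mathbf{L}=\mathrm{blkdiag}(L_1\mathbf{I}_{n_1},\ldots,L_m\mathbf{I}_{n_m})$. Algorithm 1 (randomized primal-dual block update): choose $\mathbf{x}^0$, set $\boldsymbol{\lambda}^0=\mathbf{0}$, $\mathbf{r}^0=\mathbf{A}\mathbf{x}^0-\mathbf{b}$,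 parameters $\beta>0,\rho>0$, symmetric PSD matrices $\mathbf{P}_i\in\mathbb{R}^{n_i\times n_i}$. For $k=0,1,\ldots$: pick $i_k\in\{1,\ldots,m\}$ uniformly at random, independent of $i_0,\ldots,i_{k-1}$; set $\mathbf{x}_i^{k+1}=\mathbf{x}_i^k$ for $i\ne i_k$ and $$\mathbf{x}_{i_k}^{k+1}\in\arg\min_{\mathbf{x}_{i_k}}\big\langle\nabla_{i_k} f(\mathbf{x}^k)-\mathbf{A}_{i_k}^\top(\boldsymbol{\lambda}^k-\beta\mathbf{r}^k),\mathbf{x}_{i_k}\big\rangle+g_{i_k}(\mathbf{x}_{i_k})+\tfrac12\|\mathbf{x}_{i_k}-\mathbf{x}_{i_k}^k\|_{\mathbf{P}_{i_k}}^2;$$ then $\mathbf{r}^{k+1}=\mathbf{r}^k+\mathbf{A}_{i_k}(\mathbf{x}_{i_k}^{k+1}-\mathbf{x}_{i_k}^k)$ (so $\mathbf{r}^k=\mathbf{A}\mathbf{x}^k-\mathbf{b}$) and $\boldsymbol{\lambda}^{k+1}=\boldsymbol{\lambda}^k-\rho\mathbf{r}^{k+1}$. $\mathbb{E}_{i_k}$ denotes expectation over $i_k$ conditional on $i_0,\ldots,i_{k-1}$; "$\mathbf{x}$ independent of $i_k$" means $\mathbf{x}$ is determined by $i_0,\ldots,i_{k-1}$ (e.g. deterministic). *)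

theory Defs
  imports "HOL-Analysis.Analysis"
begin

text \<open>Block structure: coordinates of the ambient space real^'n are partitioned into
  blocks 0..m-1 by a map blk.  U_i y keeps the i-th block of y and zeroes the rest.\<close>
definition blkU :: "('n \<Rightarrow> nat) \<Rightarrow> nat \<Rightarrow> real^'n \<Rightarrow> real^'n" where
  "blkU blk i y = (\<chi> j. if blk j = i then y $ j else 0)"

definition qnorm :: "real^'n^'n \<Rightarrow> real^'n \<Rightarrow> real" where
  "qnorm M z = z \<bullet> (M *v z)"

definition Lmat :: "('n \<Rightarrow> nat) \<Rightarrow> (nat \<Rightarrow> real) \<Rightarrow> real^'n^'n" where
  "Lmat blk Lv = (\<chi> a b. if a = b then Lv (blk a) else 0)"

definition ereal_convex :: "(real^'n \<Rightarrow> ereal) \<Rightarrow> bool" where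
  "ereal_convex g \<longleftrightarrow> (\<forall>x y t. 0 \<le> t \<and> t \<le> 1 \<longrightarrow>
      g ((1 - t) *\<^sub>R x + t *\<^sub>R y) \<le> ereal (1 - t) * g x + ereal t * g y)"

definition ereal_lsc :: "(real^'n \<Rightarrow> ereal) \<Rightarrow> bool" where
  "ereal_lsc g \<longleftrightarrow> (\<forall>x. g x \<le> Liminf (at x) g)"

definition ereal_proper :: "(real^'n \<Rightarrow> ereal) \<Rightarrow> bool" where
  "ereal_proper g \<longleftrightarrow> (\<forall>x. g x \<noteq> -\<infinity>) \<and> (\<exists>x. g x \<noteq> \<infinity>)"

text \<open>A function of the full vector that depends only on block i (i.e. g_i(x_i)).\<close>
definition depends_only_on_block :: "('n \<Rightarrow> nat) \<Rightarrow> nat \<Rightarrow> (real^'n \<Rightarrow> 'b) \<Rightarrow> bool" where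
  "depends_only_on_block blk i h \<longleftrightarrow>
     (\<forall>x y. (\<forall>j. blk j = i \<longrightarrow> x $ j = y $ j) \<longrightarrow> h x = h y)"

end

theory Submission
  imports Defs
begin

text \<open>Optimality of the proximal step, compared with the
  point that agrees with x on block i and with x^k elsewhere (three-point inequality), the block
  descent lemma for f, and an exact identity for the multiplier update bound the outcome of the
  step; the only term that is not controlled is the inner product of the gradient of the augmented
  Lagrangian at x^k with the i-th block of x^k - x. Averaging over the m equally likely blocks
  reassembles these blocks into x^k - x, and convexity of f together with A x = b bounds the
  resulting inner product, which produces the factor 1 - 1/m. The extended-real bookkeeping only
  has to deal with g_l(x^k) = \<infinity>, where the right-hand side is infinite unless m = 1.\<close>

section \<open>Smooth convex functions\<close>

lemma has_real_derivative_along_line: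
  fixes f :: "real^'n::finite \<Rightarrow> real"
  assumes "\<And>y. GDERIV f y :> grad y"
  shows "((\<lambda>t. f (a + t *\<^sub>R d)) has_real_derivative grad (a + t *\<^sub>R d) \<bullet> d) (at t)"
proof -
  have "((\<lambda>t. a + t *\<^sub>R d) has_derivative (\<lambda>s. s *\<^sub>R d)) (at t)"
    by (auto intro!: derivative_eq_intros)
  moreover have "(f has_derivative (\<lambda>h. h \<bullet> grad (a + t *\<^sub>R d))) (at (a + t *\<^sub>R d))"
    using assms by (simp add: gderiv_def)
  ultimately have "((\<lambda>t. f (a + t *\<^sub>R d)) has_derivative (\<lambda>s. (s *\<^sub>R d) \<bullet> grad (a + t *\<^sub>R d))) (at t)"
    using diff_chain_at by (fastforce simp: o_def)
  then show ?thesis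
    by (simp add: has_field_derivative_def inner_commute mult_commute_abs)
qed

lemma descent_lemma:
  fixes f :: "real^'n::finite \<Rightarrow> real"
  assumes f_grad: "\<And>y. GDERIV f y :> grad y"
    and lip: "\<And>t. 0 \<le> t \<Longrightarrow> t \<le> 1 \<Longrightarrow> (grad (a + t *\<^sub>R d) - grad a) \<bullet> d \<le> L * t * (norm d)\<^sup>2"
  shows "f (a + d) \<le> f a + grad a \<bullet> d + L / 2 * (norm d)\<^sup>2"
proof -
  define \<phi> where "\<phi> t = f (a + t *\<^sub>R d) - t * (grad a \<bullet> d) - L / 2 * t\<^sup>2 * (norm d)\<^sup>2" for t
  have "\<phi> 1 \<le> \<phi> 0"
  proof (rule DERIV_nonpos_imp_nonincreasing[of 0 1])
    fix t :: real assume t: "0 \<le> t" "t \<le> 1"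
    have "(\<phi> has_real_derivative
        grad (a + t *\<^sub>R d) \<bullet> d - grad a \<bullet> d - L / 2 * (2 * t) * (norm d)\<^sup>2) (at t)"
      unfolding \<phi>_def
      by (rule has_real_derivative_along_line[OF f_grad] derivative_eq_intros refl | simp)+
    moreover have "grad (a + t *\<^sub>R d) \<bullet> d - grad a \<bullet> d - L / 2 * (2 * t) * (norm d)\<^sup>2 \<le> 0"
      using lip[OF t] by (simp add: inner_diff_left)
    ultimately show "\<exists>y. DERIV \<phi> t :> y \<and> y \<le> 0" by blast
  qed simp
  then show ?thesis by (simp add: \<phi>_def)
qed

lemma convex_on_imp_above_tangent_gderiv:
  fixes f :: "real^'n::finite \<Rightarrow> real"
  assumes f_grad: "\<And>y. GDERIV f y :> grad y" and f_convex: "convex_on UNIV f"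
  shows "f a + grad a \<bullet> (x - a) \<le> f x"
proof -
  define \<psi> where "\<psi> t = f (a + t *\<^sub>R (x - a))" for t
  have "convex_on UNIV \<psi>"
    unfolding convex_on_def \<psi>_def
  proof (intro conjI allI impI ballI, simp)
    fix s t u v :: real assume uv: "0 \<le> u" "0 \<le> v" "u + v = 1"
    then have "a + (u * s + v * t) *\<^sub>R (x - a) = u *\<^sub>R (a + s *\<^sub>R (x - a)) + v *\<^sub>R (a + t *\<^sub>R (x - a))"
      by (simp add: algebra_simps flip: scaleR_add_left)
    then show "f (a + (u *\<^sub>R s + v *\<^sub>R t) *\<^sub>R (x - a))
        \<le> u * f (a + s *\<^sub>R (x - a)) + v * f (a + t *\<^sub>R (x - a))"
      using f_convex uv by (simp add: convex_on_def)
  qed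
  moreover have "(\<psi> has_real_derivative grad a \<bullet> (x - a)) (at 0)"
    unfolding \<psi>_def using has_real_derivative_along_line[OF f_grad, of a "x - a" 0] by simp
  ultimately have "\<psi> 1 - \<psi> 0 \<ge> (grad a \<bullet> (x - a)) * (1 - 0)"
    by (intro convex_on_imp_above_tangent) auto
  then show ?thesis by (simp add: \<psi>_def)
qed

section \<open>Quadratic forms and proximal steps\<close>

lemma inner_transpose_mult:
  fixes A :: "real^'n::finite^'q::finite"
  shows "(transpose A *v w) \<bullet> v = w \<bullet> (A *v v)"
  by (simp add: dot_lmul_matrix)

lemma qnorm_add_scaleR:
  fixes P :: "real^'n::finite^'n"
  assumes "transpose P = P"
  shows "qnorm P (u + t *\<^sub>R w) = qnorm P u + 2 * t * ((P *v u) \<bullet> w) + t\<^sup>2 * qnorm P w"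
proof -
  have "u \<bullet> (P *v w) = (P *v u) \<bullet> w"
    using inner_transpose_mult[of P u w] assms by simp
  then show ?thesis
    by (simp add: qnorm_def matrix_vector_right_distrib matrix_vector_mult_scaleR
        inner_add_left inner_add_right power2_eq_square inner_commute algebra_simps)
qed

lemma qnorm_diff_left: "qnorm (M - N) d = qnorm M d - qnorm N d"
  by (simp add: qnorm_def matrix_vector_mult_diff_rdistrib inner_diff_right)

lemma qnorm_scaleR_left: "qnorm (c *\<^sub>R M) (d :: real^'n::finite) = c * qnorm M d"
proof -
  have "(c *\<^sub>R M) *v d = c *\<^sub>R (M *v d)"
    by (auto simp: vec_eq_iff matrix_vector_mult_def sum_distrib_left mult.assoc)
  then show ?thesis by (simp add: qnorm_def)
qed

lemma qnorm_transpose_mult_self: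
  fixes A :: "real^'n::finite^'q::finite"
  shows "qnorm (transpose A ** A) d = (norm (A *v d))\<^sup>2"
  by (simp add: qnorm_def power2_norm_eq_inner flip: matrix_vector_mul_assoc)
     (metis dot_lmul_matrix inner_commute)

lemma nonneg_if_nonneg_near_zero:
  fixes K Q :: real
  assumes "\<And>t. 0 < t \<Longrightarrow> t \<le> 1 \<Longrightarrow> 0 \<le> t * K + t\<^sup>2 * Q"
  shows "0 \<le> K"
proof (rule tendsto_lowerbound)
  show "((\<lambda>t. K + t * Q) \<longlongrightarrow> K) (at_right 0)"
    by (auto intro!: tendsto_eq_intros)
  have "0 \<le> K + t * Q" if "0 < t" "t < 1" for t
  proof -
    have "0 \<le> t * (K + t * Q)"
      using assms[of t] that by (simp add: power2_eq_square algebra_simps)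
    then show ?thesis using that by (simp add: zero_le_mult_iff)
  qed
  then show "\<forall>\<^sub>F t in at_right 0. 0 \<le> K + t * Q"
    using eventually_at_right_real[of 0 1] by (auto elim: eventually_mono)
qed simp

text \<open>Compare the minimizer z with the points of the segment from z to y and let them tend to z.\<close>
lemma prox_three_point:
  fixes h :: "real^'n::finite \<Rightarrow> ereal" and P :: "real^'n^'n"
  assumes S: "convex S" "z \<in> S" "y \<in> S"
    and h_convex: "ereal_convex h" and h_not_minf: "\<And>v. h v \<noteq> -\<infinity>" and hy: "h y \<noteq> \<infinity>"
    and P_sym: "transpose P = P"
    and z_min: "\<And>v. v \<in> S \<Longrightarrow>
      ereal (c \<bullet> z + qnorm P (z - a) / 2) + h z \<le> ereal (c \<bullet> v + qnorm P (v - a) / 2) + h v"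
  shows "h z \<noteq> \<infinity>"
    and "c \<bullet> z + real_of_ereal (h z) + (P *v (z - a)) \<bullet> (z - y) \<le> c \<bullet> y + real_of_ereal (h y)"
proof -
  obtain Hy where Hy: "h y = ereal Hy" using hy h_not_minf by (cases "h y") auto
  show hz: "h z \<noteq> \<infinity>" using z_min[OF S(3)] Hy by auto
  then obtain Hz where Hz: "h z = ereal Hz" using h_not_minf by (cases "h z") auto
  define u w where "u = z - a" and "w = y - z"
  have "0 \<le> c \<bullet> w + Hy - Hz + (P *v u) \<bullet> w"
  proof (rule nonneg_if_nonneg_near_zero)
    fix t :: real assume t: "0 < t" "t \<le> 1"
    define v where "v = (1 - t) *\<^sub>R z + t *\<^sub>R y"
    have "v \<in> S" using S t unfolding v_def by (intro convexD) auto
    have "h v \<le> ereal (1 - t) * h z + ereal t * h y"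
      using h_convex t unfolding ereal_convex_def v_def by auto
    then have hv: "h v \<le> ereal ((1 - t) * Hz + t * Hy)" by (simp add: Hy Hz)
    have "ereal (c \<bullet> z + qnorm P u / 2) + h z \<le> ereal (c \<bullet> v + qnorm P (v - a) / 2) + h v"
      using z_min[OF \<open>v \<in> S\<close>] by (simp add: u_def)
    also have "\<dots> \<le> ereal (c \<bullet> v + qnorm P (v - a) / 2) + ereal ((1 - t) * Hz + t * Hy)"
      by (rule add_left_mono[OF hv])
    finally have "c \<bullet> z + qnorm P u / 2 + Hz \<le> c \<bullet> v + qnorm P (v - a) / 2 + ((1 - t) * Hz + t * Hy)"
      by (simp add: Hz)
    moreover have "v - a = u + t *\<^sub>R w" "c \<bullet> v = c \<bullet> z + t * (c \<bullet> w)"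
      by (simp_all add: v_def u_def w_def algebra_simps inner_diff_right)
    ultimately have "c \<bullet> z + qnorm P u / 2 + Hz
        \<le> c \<bullet> z + t * (c \<bullet> w) + qnorm P (u + t *\<^sub>R w) / 2 + ((1 - t) * Hz + t * Hy)"
      by (simp only:)
    then show "0 \<le> t * (c \<bullet> w + Hy - Hz + (P *v u) \<bullet> w) + t\<^sup>2 * (qnorm P w / 2)"
      unfolding qnorm_add_scaleR[OF P_sym] by (simp add: field_simps)
  qed
  then show "c \<bullet> z + real_of_ereal (h z) + (P *v (z - a)) \<bullet> (z - y) \<le> c \<bullet> y + real_of_ereal (h y)"
    by (simp add: Hy Hz u_def w_def inner_diff_right)
qed

section \<open>Block structure\<close>

definition block_slice :: "('n \<Rightarrow> nat) \<Rightarrow> nat \<Rightarrow> real^'n \<Rightarrow> (real^'n) set" where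
  "block_slice blk i a = {v. \<forall>j. blk j \<noteq> i \<longrightarrow> v $ j = a $ j}"

lemma blkU_nth [simp]: "blkU blk i y $ j = (if blk j = i then y $ j else 0)"
  by (simp add: blkU_def)

lemma in_block_slice_iff: "v \<in> block_slice blk i a \<longleftrightarrow> blkU blk i (v - a) = v - a"
  by (auto simp: block_slice_def vec_eq_iff)

lemma convex_block_slice: "convex (block_slice blk i a)"
  by (auto simp: convex_def block_slice_def simp flip: distrib_right)

lemma inner_blkU: "blkU blk i v \<bullet> w = v \<bullet> blkU blk i (w :: real^'n::finite)"
  unfolding inner_vec_def by (rule sum.cong) auto

lemma sum_blkU:
  assumes "\<And>j. blk j < m"
  shows "(\<Sum>i<m. blkU blk i v) = v"
proof -
  have "(\<Sum>i<m. blkU blk i v) $ j = v $ j" for j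
    using assms[of j] by (simp add: sum_component sum.delta)
  then show ?thesis by (simp add: vec_eq_iff)
qed

lemma blkU_fixed_nth: "blkU blk i d = d \<Longrightarrow> blk j \<noteq> i \<Longrightarrow> d $ j = 0"
  by (metis blkU_nth)

lemma qnorm_Lmat_block:
  assumes "blkU blk i d = (d :: real^'n::finite)"
  shows "qnorm (Lmat blk Lv) d = Lv i * (norm d)\<^sup>2"
proof -
  have "(Lmat blk Lv *v d) $ a = (Lv i *\<^sub>R d) $ a" for a
  proof -
    have "(Lmat blk Lv *v d) $ a = (\<Sum>c\<in>UNIV. (if a = c then Lv (blk a) else 0) * d $ c)"
      by (simp add: Lmat_def matrix_vector_mult_def)
    also have "\<dots> = (\<Sum>c\<in>UNIV. if a = c then Lv (blk a) * d $ c else 0)"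
      by (rule sum.cong) auto
    also have "\<dots> = (Lv i *\<^sub>R d) $ a"
      using blkU_fixed_nth[OF assms, of a] by (cases "blk a = i") auto
    finally show ?thesis .
  qed
  then have "Lmat blk Lv *v d = Lv i *\<^sub>R d" by (simp add: vec_eq_iff)
  then show ?thesis by (simp add: qnorm_def power2_norm_eq_inner)
qed

lemma blkU_blockdiag_mult:
  fixes P :: "real^'n::finite^'n"
  assumes "\<And>a c. blk a \<noteq> blk c \<Longrightarrow> P $ a $ c = 0" and "blkU blk i d = d"
  shows "blkU blk i (P *v d) = P *v d"
proof -
  have "P $ a $ c * d $ c = 0" if "blk a \<noteq> i" for a c
    using assms(1) blkU_fixed_nth[OF assms(2)] that by (cases "blk c = i") auto
  then show ?thesis by (auto simp: vec_eq_iff matrix_vector_mult_def intro!: sum.neutral)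
qed

lemma block_descent:
  fixes f :: "real^'n::finite \<Rightarrow> real"
  assumes f_grad: "\<And>y. GDERIV f y :> grad y"
    and lip: "\<And>y e. norm (blkU blk i (grad (y + blkU blk i e) - grad y)) \<le> L * norm (blkU blk i e)"
    and d: "blkU blk i d = d"
  shows "f (a + d) \<le> f a + grad a \<bullet> d + L / 2 * (norm d)\<^sup>2"
proof (rule descent_lemma[OF f_grad])
  fix t :: real assume t: "0 \<le> t" "t \<le> 1"
  have td: "blkU blk i (t *\<^sub>R d) = t *\<^sub>R d"
    using d by (simp add: vec_eq_iff) (metis blkU_nth mult_zero_right)
  have "(grad (a + t *\<^sub>R d) - grad a) \<bullet> d = blkU blk i (grad (a + t *\<^sub>R d) - grad a) \<bullet> d"
    by (simp add: inner_blkU d)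
  also have "\<dots> \<le> norm (blkU blk i (grad (a + t *\<^sub>R d) - grad a)) * norm d"
    by (rule norm_cauchy_schwarz)
  also have "\<dots> \<le> L * norm (t *\<^sub>R d) * norm d"
    using lip[of a "t *\<^sub>R d"] by (intro mult_right_mono) (simp_all add: td)
  also have "\<dots> = L * t * (norm d)\<^sup>2"
    using t by (simp add: power2_eq_square)
  finally show "(grad (a + t *\<^sub>R d) - grad a) \<bullet> d \<le> L * t * (norm d)\<^sup>2" .
qed

lemma dual_step_identity:
  fixes r a l :: "'a::real_inner"
  shows "- ((l - \<rho> *\<^sub>R (r + a)) \<bullet> (r + a)) + (\<beta> - \<rho>) * (norm (r + a))\<^sup>2
      - \<beta> / 2 * (norm (r + a))\<^sup>2 - \<beta> * (norm a)\<^sup>2 / 2 + (l - \<beta> *\<^sub>R r) \<bullet> a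
    = - (l \<bullet> r) + \<beta> / 2 * (norm r)\<^sup>2"
  by (simp add: power2_norm_eq_inner inner_add_left inner_add_right inner_diff_left
      inner_diff_right inner_commute algebra_simps)

section \<open>One iteration\<close>

text \<open>One iteration of the algorithm from the state (xk, r, lam): if block i is picked, the new
  primal iterate is z i, the new residual res i and the new multiplier lamn i. The point x is
  feasible, so the residual A xk - b equals A (xk - x).\<close>
locale prox_block_step =
  fixes blk :: "'n::finite \<Rightarrow> nat" and m :: nat
    and f :: "real^'n \<Rightarrow> real" and grad :: "real^'n \<Rightarrow> real^'n"
    and g :: "nat \<Rightarrow> real^'n \<Rightarrow> ereal"
    and A :: "real^'n^'q::finite" and Lv :: "nat \<Rightarrow> real" and P :: "real^'n^'n"
    and \<beta> \<rho> :: real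
    and x xk :: "real^'n" and lam r :: "real^'q"
    and z :: "nat \<Rightarrow> real^'n" and res lamn :: "nat \<Rightarrow> real^'q"
  assumes blk_range: "\<And>j. blk j < m"
    and f_convex: "convex_on UNIV f"
    and f_grad: "\<And>y. GDERIV f y :> grad y"
    and g_block: "\<And>i. i < m \<Longrightarrow> depends_only_on_block blk i (g i)"
    and g_convex: "\<And>i. i < m \<Longrightarrow> ereal_convex (g i)"
    and g_not_minf: "\<And>i v. i < m \<Longrightarrow> g i v \<noteq> -\<infinity>"
    and g_x_finite: "\<And>i. i < m \<Longrightarrow> g i x \<noteq> \<infinity>"
    and Lip: "\<And>i y e. i < m \<Longrightarrow>
      norm (blkU blk i (grad (y + blkU blk i e) - grad y)) \<le> Lv i * norm (blkU blk i e)"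
    and P_blockdiag: "\<And>a c. blk a \<noteq> blk c \<Longrightarrow> P $ a $ c = 0"
    and P_sym: "transpose P = P"
    and r_eq: "r = A *v (xk - x)"
    and z_slice: "\<And>i. i < m \<Longrightarrow> z i \<in> block_slice blk i xk"
    and z_argmin: "\<And>i v. i < m \<Longrightarrow> v \<in> block_slice blk i xk \<Longrightarrow>
      ereal (blkU blk i (grad xk - transpose A *v (lam - \<beta> *\<^sub>R r)) \<bullet> z i + qnorm P (z i - xk) / 2)
        + g i (z i)
      \<le> ereal (blkU blk i (grad xk - transpose A *v (lam - \<beta> *\<^sub>R r)) \<bullet> v + qnorm P (v - xk) / 2)
        + g i v"
    and res_eq: "\<And>i. i < m \<Longrightarrow> res i = r + A *v (z i - xk)"
    and lamn_eq: "\<And>i. i < m \<Longrightarrow> lamn i = lam - \<rho> *\<^sub>R res i"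
begin

text \<open>The gradient at xk of the augmented Lagrangian f - \<langle>lam, A v - b\<rangle> + \<beta>/2 \<parallel>A v - b\<parallel>^2.\<close>
abbreviation lgrad :: "real^'n" where
  "lgrad \<equiv> grad xk - transpose A *v (lam - \<beta> *\<^sub>R r)"

abbreviation obj :: "real^'n \<Rightarrow> ereal" where
  "obj v \<equiv> ereal (f v) + (\<Sum>l<m. g l v)"

abbreviation Pgap :: "real^'n^'n" where
  "Pgap \<equiv> P - Lmat blk Lv - \<beta> *\<^sub>R (transpose A ** A)"

text \<open>The terms g l for l \<noteq> i are omitted: they do not change when block i is updated.\<close>
abbreviation block_gap :: "nat \<Rightarrow> real" where
  "block_gap i \<equiv> f (z i) - f x + real_of_ereal (g i (z i)) - real_of_ereal (g i x)
    + (- (lamn i \<bullet> res i) + (\<beta> - \<rho>) * (norm (res i))\<^sup>2 - \<beta> / 2 * (norm (res i))\<^sup>2)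
    + 1 / 2 * (qnorm P (z i - x) + qnorm Pgap (z i - xk))"

lemma z_minus_xk_block: "i < m \<Longrightarrow> blkU blk i (z i - xk) = z i - xk"
  using z_slice by (simp add: in_block_slice_iff)

lemma block_prox_bound:
  assumes i: "i < m"
  shows "g i (z i) \<noteq> \<infinity>"
    and "real_of_ereal (g i (z i)) + lgrad \<bullet> (z i - xk) + lgrad \<bullet> blkU blk i (xk - x)
      + qnorm P (z i - xk) + (P *v (z i - xk)) \<bullet> (xk - x) \<le> real_of_ereal (g i x)"
proof -
  define y where "y = xk + blkU blk i (x - xk)"
  define d where "d = z i - xk"
  have d: "blkU blk i d = d" using z_minus_xk_block[OF i] by (simp add: d_def)
  have y: "y \<in> block_slice blk i xk" by (simp add: y_def in_block_slice_iff vec_eq_iff)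
  have gy: "g i y = g i x"
    using g_block[OF i] by (auto simp: depends_only_on_block_def y_def)
  note three_point = prox_three_point[OF convex_block_slice z_slice[OF i] y g_convex[OF i]
      g_not_minf[OF i] _ P_sym z_argmin[OF i]]
  show "g i (z i) \<noteq> \<infinity>" using three_point(1) gy g_x_finite[OF i] by simp
  have zy: "z i - y = d + blkU blk i (xk - x)" by (simp add: y_def d_def vec_eq_iff)
  have zy_block: "blkU blk i (z i - y) = z i - y"
    using blkU_fixed_nth[OF d] by (simp add: zy vec_eq_iff)
  have Pd_block: "blkU blk i (P *v d) = P *v d" by (rule blkU_blockdiag_mult[OF P_blockdiag d])
  have "blkU blk i lgrad \<bullet> (z i - y) = lgrad \<bullet> d + lgrad \<bullet> blkU blk i (xk - x)"
    by (simp add: inner_blkU zy_block) (simp add: zy inner_add_right)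
  moreover have "(P *v d) \<bullet> (z i - y) = qnorm P d + (P *v d) \<bullet> (xk - x)"
    by (metis Pd_block inner_add_right inner_blkU inner_commute qnorm_def zy)
  ultimately show "real_of_ereal (g i (z i)) + lgrad \<bullet> (z i - xk) + lgrad \<bullet> blkU blk i (xk - x)
      + qnorm P (z i - xk) + (P *v (z i - xk)) \<bullet> (xk - x) \<le> real_of_ereal (g i x)"
    using three_point(2) gy g_x_finite[OF i] by (simp add: d_def inner_diff_right)
qed

lemma block_step_bound:
  assumes i: "i < m"
  shows "block_gap i \<le> f xk - f x - lgrad \<bullet> blkU blk i (xk - x) + 1 / 2 * qnorm P (xk - x)
    - lam \<bullet> r + \<beta> / 2 * (norm r)\<^sup>2"
proof -
  define d where "d = z i - xk"
  have d: "blkU blk i d = d" using z_minus_xk_block[OF i] by (simp add: d_def)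
  have prox: "real_of_ereal (g i (z i)) + lgrad \<bullet> d + lgrad \<bullet> blkU blk i (xk - x)
      + qnorm P d + (P *v d) \<bullet> (xk - x) \<le> real_of_ereal (g i x)"
    using block_prox_bound(2)[OF i] by (simp add: d_def)
  have descent: "f (z i) \<le> f xk + grad xk \<bullet> d + Lv i * (norm d)\<^sup>2 / 2"
    using block_descent[OF f_grad Lip[OF i] d, of xk] by (simp add: d_def)
  have expand: "qnorm P (z i - x) = qnorm P d + 2 * ((P *v d) \<bullet> (xk - x)) + qnorm P (xk - x)"
    using qnorm_add_scaleR[OF P_sym, of d 1 "xk - x"] by (simp add: d_def)
  have gap: "qnorm Pgap d = qnorm P d - Lv i * (norm d)\<^sup>2 - \<beta> * (norm (A *v d))\<^sup>2"
    by (simp add: qnorm_diff_left qnorm_scaleR_left qnorm_transpose_mult_self qnorm_Lmat_block[OF d])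
  have half: "1 / 2 * (qnorm P (z i - x) + qnorm Pgap d) = qnorm P d + (P *v d) \<bullet> (xk - x)
      + 1 / 2 * qnorm P (xk - x) - Lv i * (norm d)\<^sup>2 / 2 - \<beta> * (norm (A *v d))\<^sup>2 / 2"
    unfolding expand gap by (simp add: field_simps)
  have lgrad_d: "lgrad \<bullet> d = grad xk \<bullet> d - (lam - \<beta> *\<^sub>R r) \<bullet> (A *v d)"
    by (simp add: inner_diff_left dot_lmul_matrix)
  have dual: "- (lamn i \<bullet> res i) + (\<beta> - \<rho>) * (norm (res i))\<^sup>2 - \<beta> / 2 * (norm (res i))\<^sup>2
      - \<beta> * (norm (A *v d))\<^sup>2 / 2 + (lam - \<beta> *\<^sub>R r) \<bullet> (A *v d) = - (lam \<bullet> r) + \<beta> / 2 * (norm r)\<^sup>2"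
    unfolding lamn_eq[OF i] res_eq[OF i] d_def[symmetric] by (rule dual_step_identity)
  show ?thesis
    unfolding d_def[symmetric] using prox descent half lgrad_d dual by linarith
qed

lemma sum_block_gap_bound:
  "(\<Sum>i<m. block_gap i) \<le> (real m - 1) * (f xk - f x - lam \<bullet> r + \<beta> * (norm r)\<^sup>2)
    - real m * \<beta> / 2 * (norm r)\<^sup>2 + real m / 2 * qnorm P (xk - x)"
proof -
  define K where "K = f xk - f x + 1 / 2 * qnorm P (xk - x) - lam \<bullet> r + \<beta> / 2 * (norm r)\<^sup>2"
  have "(\<Sum>i<m. block_gap i) \<le> (\<Sum>i<m. K - lgrad \<bullet> blkU blk i (xk - x))"
  proof (rule sum_mono)
    fix i assume "i \<in> {..<m}"
    with block_step_bound[of i] show "block_gap i \<le> K - lgrad \<bullet> blkU blk i (xk - x)"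
      unfolding K_def by simp
  qed
  also have "\<dots> = real m * K - lgrad \<bullet> (xk - x)"
    by (simp add: sum_subtractf sum_blkU[OF blk_range] flip: inner_sum_right)
  also have "lgrad \<bullet> (xk - x) = grad xk \<bullet> (xk - x) - (lam - \<beta> *\<^sub>R r) \<bullet> r"
    by (simp only: inner_diff_left inner_transpose_mult r_eq[symmetric])
  also have "(lam - \<beta> *\<^sub>R r) \<bullet> r = lam \<bullet> r - \<beta> * (norm r)\<^sup>2"
    by (simp add: inner_diff_left power2_norm_eq_inner)
  also have "real m * K - (grad xk \<bullet> (xk - x) - (lam \<bullet> r - \<beta> * (norm r)\<^sup>2))
      \<le> real m * K - (f xk - f x - (lam \<bullet> r - \<beta> * (norm r)\<^sup>2))"
    using convex_on_imp_above_tangent_gderiv[OF f_grad f_convex, of xk x]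
    by (simp add: inner_diff_right)
  also have "\<dots> = (real m - 1) * (f xk - f x - lam \<bullet> r + \<beta> * (norm r)\<^sup>2)
      - real m * \<beta> / 2 * (norm r)\<^sup>2 + real m / 2 * qnorm P (xk - x)"
    by (simp add: K_def algebra_simps)
  finally show ?thesis .
qed

lemma g_real: "i < m \<Longrightarrow> g i v \<noteq> \<infinity> \<Longrightarrow> ereal (real_of_ereal (g i v)) = g i v"
  using g_not_minf by (cases "g i v") auto

lemma sum_g_real:
  assumes "\<And>l. l < m \<Longrightarrow> g l v \<noteq> \<infinity>"
  shows "(\<Sum>l<m. g l v) = ereal (\<Sum>l<m. real_of_ereal (g l v))"
proof -
  have "(\<Sum>l<m. g l v) = (\<Sum>l<m. ereal (real_of_ereal (g l v)))"
    by (rule sum.cong) (simp_all add: g_real assms)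
  then show ?thesis by simp
qed

lemma g_z_other_block:
  assumes "l < m" "i < m" "l \<noteq> i"
  shows "g l (z i) = g l xk"
proof -
  have "\<forall>j. blk j = l \<longrightarrow> z i $ j = xk $ j"
    using z_slice[OF assms(2)] assms(3) by (auto simp: block_slice_def)
  then show ?thesis using g_block[OF assms(1)] by (simp add: depends_only_on_block_def)
qed

lemma sum_g_at_z:
  assumes i: "i < m" and xk_finite: "\<And>l. l < m \<Longrightarrow> g l xk \<noteq> \<infinity>"
  shows "(\<Sum>l<m. g l (z i)) = ereal ((\<Sum>l<m. real_of_ereal (g l xk))
    - real_of_ereal (g i xk) + real_of_ereal (g i (z i)))"
proof -
  have "(\<Sum>l<m. g l (z i)) = (\<Sum>l<m. ereal (real_of_ereal (g l xk)
      + (if l = i then real_of_ereal (g i (z i)) - real_of_ereal (g i xk) else 0)))"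
  proof (rule sum.cong)
    fix l assume "l \<in> {..<m}"
    then show "g l (z i) = ereal (real_of_ereal (g l xk)
        + (if l = i then real_of_ereal (g i (z i)) - real_of_ereal (g i xk) else 0))"
      using g_real[of i "z i"] g_real[of l xk] block_prox_bound(1)[OF i] xk_finite
        g_z_other_block[of l i] i by (cases "l = i") auto
  qed simp
  also have "\<dots> = ereal ((\<Sum>l<m. real_of_ereal (g l xk))
      - real_of_ereal (g i xk) + real_of_ereal (g i (z i)))"
    using i by (simp add: sum.distrib)
  finally show ?thesis .
qed

lemma expected_step_bound_finite:
  assumes xk_finite: "\<And>l. l < m \<Longrightarrow> g l xk \<noteq> \<infinity>"
  shows "ereal (1 / real m) * (\<Sum>i<m. obj (z i) - obj x
      + ereal (- (lamn i \<bullet> res i) + (\<beta> - \<rho>) * (norm (res i))\<^sup>2 - \<beta> / 2 * (norm (res i))\<^sup>2))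
    + ereal (1 / 2 * ((1 / real m) * (\<Sum>i<m. qnorm P (z i - x) + qnorm Pgap (z i - xk))))
    \<le> ereal (1 - 1 / real m) * (obj xk - obj x + ereal (- (lam \<bullet> r) + \<beta> * (norm r)\<^sup>2))
      + ereal (- \<beta> / 2 * (norm r)\<^sup>2 + 1 / 2 * qnorm P (xk - x))"
proof -
  define Gx Gk where "Gx = (\<Sum>l<m. real_of_ereal (g l x))" and "Gk = (\<Sum>l<m. real_of_ereal (g l xk))"
  define D where "D i = - (lamn i \<bullet> res i) + (\<beta> - \<rho>) * (norm (res i))\<^sup>2 - \<beta> / 2 * (norm (res i))\<^sup>2"
    for i
  define Q where "Q i = qnorm P (z i - x) + qnorm Pgap (z i - xk)" for i
  define S where "S = (\<Sum>i<m. f (z i) + (Gk - real_of_ereal (g i xk) + real_of_ereal (g i (z i)))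
    - (f x + Gx) + D i)"
  define C where "C = f xk + Gk - (f x + Gx) + (- (lam \<bullet> r) + \<beta> * (norm r)\<^sup>2)"
  have m: "0 < m" using blk_range[of undefined] by simp
  have "(\<Sum>i<m. obj (z i) - obj x + ereal (D i)) = ereal S"
  proof -
    have "(\<Sum>i<m. obj (z i) - obj x + ereal (D i)) = (\<Sum>i<m. ereal (f (z i)
        + (Gk - real_of_ereal (g i xk) + real_of_ereal (g i (z i))) - (f x + Gx) + D i))"
      by (rule sum.cong) (simp_all add: sum_g_at_z xk_finite sum_g_real g_x_finite Gk_def Gx_def)
    then show ?thesis by (simp add: S_def)
  qed
  moreover have "obj xk - obj x + ereal (- (lam \<bullet> r) + \<beta> * (norm r)\<^sup>2) = ereal C"
    by (simp add: sum_g_real xk_finite g_x_finite C_def Gk_def Gx_def)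
  moreover have "S + 1 / 2 * (\<Sum>i<m. Q i) = (\<Sum>i<m. block_gap i) + (real m - 1) * (Gk - Gx)"
  proof -
    have "S + 1 / 2 * (\<Sum>i<m. Q i) = (\<Sum>i<m. block_gap i + (Gk - real_of_ereal (g i xk))
        - (Gx - real_of_ereal (g i x)))"
      unfolding S_def sum_distrib_left sum.distrib[symmetric]
      by (rule sum.cong) (simp_all add: D_def Q_def algebra_simps)
    also have "\<dots> = (\<Sum>i<m. block_gap i) + (real m - 1) * (Gk - Gx)"
      by (simp add: sum.distrib sum_subtractf Gk_def Gx_def algebra_simps)
    finally show ?thesis .
  qed
  moreover have "1 / real m * S + 1 / 2 * (1 / real m * (\<Sum>i<m. Q i))
      \<le> (1 - 1 / real m) * C + (- \<beta> / 2 * (norm r)\<^sup>2 + 1 / 2 * qnorm P (xk - x))"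
  proof -
    have "real m * (1 / real m * S + 1 / 2 * (1 / real m * (\<Sum>i<m. Q i)))
        = S + 1 / 2 * (\<Sum>i<m. Q i)"
      using m by (simp add: field_simps)
    also have "\<dots> = (\<Sum>i<m. block_gap i) + (real m - 1) * (Gk - Gx)"
      by fact
    also have "\<dots> \<le> (real m - 1) * (f xk - f x - lam \<bullet> r + \<beta> * (norm r)\<^sup>2)
        - real m * \<beta> / 2 * (norm r)\<^sup>2 + real m / 2 * qnorm P (xk - x) + (real m - 1) * (Gk - Gx)"
      using sum_block_gap_bound by simp
    also have "\<dots> = real m * ((1 - 1 / real m) * C + (- \<beta> / 2 * (norm r)\<^sup>2 + 1 / 2 * qnorm P (xk - x)))"
      using m by (simp add: C_def field_simps)
    finally show ?thesis using m by simp
  qed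
  ultimately show ?thesis
    unfolding D_def[symmetric] Q_def[symmetric] by simp
qed

theorem expected_step_bound:
  "ereal (1 / real m) * (\<Sum>i<m. obj (z i) - obj x
      + ereal (- (lamn i \<bullet> res i) + (\<beta> - \<rho>) * (norm (res i))\<^sup>2 - \<beta> / 2 * (norm (res i))\<^sup>2))
    + ereal (1 / 2 * ((1 / real m) * (\<Sum>i<m. qnorm P (z i - x) + qnorm Pgap (z i - xk))))
    \<le> ereal (1 - 1 / real m) * (obj xk - obj x + ereal (- (lam \<bullet> r) + \<beta> * (norm r)\<^sup>2))
      + ereal (- \<beta> / 2 * (norm r)\<^sup>2 + 1 / 2 * qnorm P (xk - x))"
proof (cases "\<forall>l<m. g l xk \<noteq> \<infinity>")
  case True
  then show ?thesis by (intro expected_step_bound_finite) auto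
next
  case False
  then obtain l where l: "l < m" "g l xk = \<infinity>" by blast
  show ?thesis
  proof (cases "m = 1")
    case True
    obtain Gz Gx where "g 0 (z 0) = ereal Gz" "g 0 x = ereal Gx"
      using g_real[of 0 "z 0"] g_real[of 0 x] block_prox_bound(1)[of 0] g_x_finite[of 0] True
      by (metis less_one)
    then show ?thesis
      using sum_block_gap_bound True by (simp add: algebra_simps flip: zero_ereal_def)
  next
    case False
    have "(\<Sum>l<m. g l xk) = \<infinity>" using l by (auto simp: sum_Pinfty)
    moreover have "(\<Sum>l<m. g l x) \<noteq> \<infinity>" by (simp add: sum_g_real g_x_finite)
    moreover have "0 < 1 - 1 / real m" using False l(1) by (simp add: field_simps)
    ultimately have rhs_infinite: "ereal (1 - 1 / real m) * (obj xk - obj x + ereal (- (lam \<bullet> r) + \<beta> * (norm r)\<^sup>2)) = \<infinity>"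
      using \<open>m \<noteq> 1\<close> by (simp add: ereal_mult_infty)
    show ?thesis by (subst rhs_infinite) simp
  qed
qed

end

theorem mainTheorem4:
  fixes m :: nat and blk :: "'n::finite \<Rightarrow> nat"
    and f :: "real^'n \<Rightarrow> real" and grad :: "real^'n \<Rightarrow> real^'n"
    and g :: "nat \<Rightarrow> real^'n \<Rightarrow> ereal"
    and A :: "real^'n^'q::finite" and b :: "real^'q"
    and Lv :: "nat \<Rightarrow> real" and Lr :: "real"
    and P :: "real^'n^'n" and \<beta> \<rho> :: real
    and X :: "nat list \<Rightarrow> real^'n" and R :: "nat list \<Rightarrow> real^'q"
    and lam :: "nat list \<Rightarrow> real^'q"
    and hs :: "nat list" and x :: "real^'n"
  assumes blk_range: "\<forall>j. blk j < m"
    and blk_nonempty: "\<forall>i<m. \<exists>j. blk j = i"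
    and f_convex: "convex_on UNIV f"
    and f_grad: "\<forall>y. GDERIV f y :> grad y"
    and grad_cont: "continuous_on UNIV grad"
    and g_block: "\<forall>i<m. depends_only_on_block blk i (g i)"
    and g_proper: "\<forall>i<m. ereal_proper (g i)"
    and g_convex: "\<forall>i<m. ereal_convex (g i)"
    and g_lsc: "\<forall>i<m. ereal_lsc (g i)"
    and L_pos: "\<forall>i<m. Lv i > 0"
    and Lip_i: "\<forall>i<m. \<forall>y z. norm (blkU blk i (grad (y + blkU blk i z) - grad y))
                         \<le> Lv i * norm (blkU blk i z)"
    and Lip_r: "\<forall>i<m. \<forall>y z. norm (grad (y + blkU blk i z) - grad y) \<le> Lr * norm (blkU blk i z)"
    and \<beta>_pos: "\<beta> > 0" and \<rho>_pos: "\<rho> > 0"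
    and P_blockdiag: "\<forall>a c. blk a \<noteq> blk c \<longrightarrow> P $ a $ c = 0"
    and P_sym: "transpose P = P"
    and P_psd: "\<forall>i<m. \<forall>y. (\<forall>j. blk j \<noteq> i \<longrightarrow> y $ j = 0) \<longrightarrow> 0 \<le> y \<bullet> (P *v y)"
    and lam_init: "lam [] = 0"
    and R_init: "R [] = A *v X [] - b"
    and X_keep: "\<forall>ks i. set ks \<subseteq> {..<m} \<and> i < m \<longrightarrow>
                   (\<forall>j. blk j \<noteq> i \<longrightarrow> X (ks @ [i]) $ j = X ks $ j)"
    and X_argmin: "\<forall>ks i. set ks \<subseteq> {..<m} \<and> i < m \<longrightarrow>
        (\<forall>y. (\<forall>j. blk j \<noteq> i \<longrightarrow> y $ j = X ks $ j) \<longrightarrow>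
          ereal (blkU blk i (grad (X ks) - transpose A *v (lam ks - \<beta> *\<^sub>R R ks)) \<bullet> X (ks @ [i])
                 + qnorm P (X (ks @ [i]) - X ks) / 2) + g i (X (ks @ [i]))
          \<le> ereal (blkU blk i (grad (X ks) - transpose A *v (lam ks - \<beta> *\<^sub>R R ks)) \<bullet> y
                 + qnorm P (y - X ks) / 2) + g i y)"
    and R_step: "\<forall>ks i. set ks \<subseteq> {..<m} \<and> i < m \<longrightarrow>
                   R (ks @ [i]) = R ks + A *v (X (ks @ [i]) - X ks)"
    and lam_step: "\<forall>ks i. set ks \<subseteq> {..<m} \<and> i < m \<longrightarrow>
                   lam (ks @ [i]) = lam ks - \<rho> *\<^sub>R R (ks @ [i])"
    and hs_valid: "set hs \<subseteq> {..<m}"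
    and x_feas: "A *v x = b"
    and Fx_finite: "(\<Sum>i<m. g i x) \<noteq> \<infinity>"
  shows
    "ereal (1 / real m) *
       (\<Sum>i<m. (ereal (f (X (hs @ [i]))) + (\<Sum>l<m. g l (X (hs @ [i]))))
                 - (ereal (f x) + (\<Sum>l<m. g l x))
                 + ereal (- (lam (hs @ [i]) \<bullet> R (hs @ [i]))
                          + (\<beta> - \<rho>) * (norm (R (hs @ [i])))\<^sup>2
                          - \<beta> / 2 * (norm (R (hs @ [i])))\<^sup>2))
     + ereal (1 / 2 * ((1 / real m) *
         (\<Sum>i<m. qnorm P (X (hs @ [i]) - x)
                 + qnorm (P - Lmat blk Lv - \<beta> *\<^sub>R (transpose A ** A)) (X (hs @ [i]) - X hs))))
     \<le> ereal (1 - 1 / real m) *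
         ((ereal (f (X hs)) + (\<Sum>l<m. g l (X hs))) - (ereal (f x) + (\<Sum>l<m. g l x))
          + ereal (- (lam hs \<bullet> R hs) + \<beta> * (norm (R hs))\<^sup>2))
       + ereal (- \<beta> / 2 * (norm (R hs))\<^sup>2 + 1 / 2 * qnorm P (X hs - x))"
proof -
  have R_residual: "R ks = A *v X ks - b" if "set ks \<subseteq> {..<m}" for ks
    using that
  proof (induction ks rule: rev_induct)
    case (snoc i ks)
    then show ?case using R_step by (simp add: matrix_vector_mult_diff_distrib)
  qed (simp add: R_init)
  interpret prox_block_step blk m f grad g A Lv P \<beta> \<rho> x "X hs" "lam hs" "R hs"
      "\<lambda>i. X (hs @ [i])" "\<lambda>i. R (hs @ [i])" "\<lambda>i. lam (hs @ [i])"
  proof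
    show "g i v \<noteq> -\<infinity>" if "i < m" for i v
      using g_proper that by (simp add: ereal_proper_def)
    show "g i x \<noteq> \<infinity>" if "i < m" for i
      using Fx_finite that by (auto simp: sum_Pinfty)
    show "R hs = A *v (X hs - x)"
      using R_residual[OF hs_valid] x_feas by (simp add: matrix_vector_mult_diff_distrib)
  qed (use assms in \<open>auto simp: block_slice_def\<close>)
  show ?thesis by (rule expected_step_bound)
qed

end
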